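(* Let $P$ be a program and $\tau\in[\![P]\!]_{\mathrm{MM}}$ pointer-race-free. If $a\in\mathrm{freed}(\tau)$, then $a\notin\mathrm{adr}(h_\tau|_{\mathrm{valid}(\tau)})$.
   Context: Programs. Programs are sets of threads (while-programs) over pointer variables $\mathit{PVar}$ and data variables $\mathit{DVar}$. The commands are: - $\mathtt{assert}\ c$ for (negated) (in)equalities of variables; - $x:=\mathtt{malloc}$; - $\mathtt{free}(x)$; - $y:=x.\mathtt{next}$, $x.\mathtt{next}:=y$, $x:=y$; - $u:=x.\mathtt{data}$, $x.\mathtt{data}:=u$; - $u:=\mathit{op}(\dots)$. Addresses carry selectors $\mathtt{next}_1..\mathtt{next}_n$ and $\mathtt{data}$. Heaps. A heap is $h=(\mathit{pval},\mathit{dval})$ with partial maps $\mathit{pval}:\mathit{PExp}\rightharpoonup\mathit{Adr}$ and $\mathit{dval}:\mathit{DExp}\rightharpoonup\mathit{Dom}$, where $\mathit{PExp}=\mathit{PVar}\cup\{a.\mathtt{next}_i: a\in\mathit{Adr}\setminus\{\mathtt{seg}\}\}$ and $\mathit{DExp}=\mathit{DVar}\cup\{a.\mathtt{data}\}$. The set $\mathrm{adr}(h)=(\mathrm{dom}\,\mathit{pval}\cup\mathrm{ran}\,\mathit{pval}\cup\mathrm{dom}\,\mathit{dval})\cap\mathit{Adr}$, with $a.\mathtt{next}_i$ and $a.\mathtt{data}$ contributing $a$. $h_\tau$ is the heap after computation $\tau$. Memory-managed semantics $[\![P]\!]_{\mathrm{MM}}$. Initially pointer variables are $\mathtt{seg}$.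 The rules are: - Assignments behave as usual; selector access through $x$ needs $h_\tau(x)\neq\mathtt{seg}$. - Asserts pass if they hold or if a compared pointer is $\mathtt{seg}$. - $\mathtt{free}$ has no update. - Malloc either picks a never-used address $a\notin\mathrm{adr}(h_\tau)$ (setting $x\mapsto a$, $a.\mathtt{data}$ arbitrary, $a.\mathtt{next}_i\mapsto \mathtt{seg}$), or re-allocates $a\in\mathrm{freed}(\tau)$ (update $[x\mapsto a]$ only). $\mathrm{freed}(\tau)$ gains $h_\tau(x)$ on $\mathtt{free}(x)$ if $h_\tau(x)\neq\mathtt{seg}$, and loses $a$ when malloc returns $a$. Valid pointers. The set $\mathrm{valid}(\tau)\subseteq\mathit{PExp}$ is all of $\mathit{PExp}$ initially. For each command: - malloc into $x$ adds $x$; - $\mathtt{free}(x)$ with $h_\tau(x)=a\neq\mathtt{seg}$ removes all $e$ with $h_\tau(e)=a$ and all $a.\mathtt{next}_i$; - $x:=y$ copies validity of $y$ to $x$; - $x.\mathtt{next}:=y$ (with $h_\tau(x)=a$) makes $a.\mathtt{next}$ valid iff $y$ is valid; - $y:=x.\mathtt{next}$ (with $h_\tau(x)=a$) makes $y$ valid iff $x$ and $a.\mathtt{next}$ are valid. Pointer race. A pointer race is an action freeing, dereferencing (reading/writing a $\mathtt{next}$ or $\mathtt{data}$ selector) or asserting on a pointer variable $x\notin\mathrm{valid}(\tau)$. PRF means no prefix is a pointer race. Restriction. $h|_R$ restricts $\mathit{pval}$ to $R$ and $\mathit{dval}$ to $\mathit{DVar}\cup\{a.\mathtt{data}: a=\mathit{pval}(e),e\in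 R\}$. *)

theory Defs
  imports Main
begin

text \<open>Pointer values: the special value seg, or a proper address (numbered by nat).
  Adr = {seg} \<union> {Ad k}.\<close>
datatype val = Seg | Ad nat

text \<open>Pointer expressions: pointer variables, and a.next_i for proper addresses a.\<close>
datatype 'pv pexp = PV 'pv | Nxt nat nat

text \<open>Data expressions: data variables and a.data.\<close>
datatype 'dv dexp = DV 'dv | Dat nat

record ('pv, 'dv, 'd) heap =
  pval :: "'pv pexp \<Rightarrow> val option"
  dval :: "'dv dexp \<Rightarrow> 'd option"

datatype ('pv, 'dv) cond = PEq 'pv 'pv | PNeq 'pv 'pv | DEq 'dv 'dv | DNeq 'dv 'dv

datatype ('pv, 'dv, 'd) com =
    Assert "('pv, 'dv) cond"
  | Malloc 'pv
  | Free 'pv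
  | LoadNext 'pv 'pv nat          \<comment> \<open>y := x.next_i  (LoadNext y x i)\<close>
  | StoreNext 'pv nat 'pv         \<comment> \<open>x.next_i := y  (StoreNext x i y)\<close>
  | Assign 'pv 'pv                \<comment> \<open>x := y        (Assign x y)\<close>
  | LoadData 'dv 'pv              \<comment> \<open>u := x.data   (LoadData u x)\<close>
  | StoreData 'pv 'dv             \<comment> \<open>x.data := u   (StoreData x u)\<close>
  | Op 'dv "'d option list \<Rightarrow> 'd option" "'dv list"

datatype ('pv, 'dv, 'd) stmt =
    Cmd "('pv, 'dv, 'd) com"
  | Skip
  | Seq "('pv, 'dv, 'd) stmt" "('pv, 'dv, 'd) stmt"
  | Choice "('pv, 'dv, 'd) stmt" "('pv, 'dv, 'd) stmt"
  | Loop "('pv, 'dv, 'd) stmt"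

fun final :: "('pv, 'dv, 'd) stmt \<Rightarrow> bool" where
  "final (Cmd c) = False"
| "final Skip = True"
| "final (Seq s1 s2) = (final s1 \<and> final s2)"
| "final (Choice s1 s2) = (final s1 \<or> final s2)"
| "final (Loop s) = True"

inductive tstep :: "('pv, 'dv, 'd) stmt \<Rightarrow> ('pv, 'dv, 'd) com \<Rightarrow> ('pv, 'dv, 'd) stmt \<Rightarrow> bool" where
  "tstep (Cmd c) c Skip"
| "tstep s1 c s1' \<Longrightarrow> tstep (Seq s1 s2) c (Seq s1' s2)"
| "final s1 \<Longrightarrow> tstep s2 c s2' \<Longrightarrow> tstep (Seq s1 s2) c s2'"
| "tstep s1 c s' \<Longrightarrow> tstep (Choice s1 s2) c s'"
| "tstep s2 c s' \<Longrightarrow> tstep (Choice s1 s2) c s'"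
| "tstep s c s' \<Longrightarrow> tstep (Loop s) c (Seq s' (Loop s))"

text \<open>The update part of an action: for malloc, the chosen address (fresh with
  an arbitrary data value, or re-allocated).\<close>
datatype 'd alloc = NoAlloc | FreshA nat 'd | ReuseA nat

type_synonym ('t, 'pv, 'dv, 'd) action = "'t \<times> ('pv, 'dv, 'd) com \<times> 'd alloc"

definition ptr :: "('pv, 'dv, 'd) heap \<Rightarrow> 'pv \<Rightarrow> val option" where
  "ptr h x = pval h (PV x)"

definition addr_of :: "('pv, 'dv, 'd) heap \<Rightarrow> 'pv \<Rightarrow> nat" where
  "addr_of h x = (case ptr h x of Some (Ad a) \<Rightarrow> a | _ \<Rightarrow> undefined)"

definition adrs :: "('pv, 'dv, 'd) heap \<Rightarrow> val set" where
  "adrs h = {Ad k | k i. pval h (Nxt k i) \<noteq> None} \<union> ran (pval h)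
            \<union> {Ad k | k. dval h (Dat k) \<noteq> None}"

definition restrict :: "('pv, 'dv, 'd) heap \<Rightarrow> 'pv pexp set \<Rightarrow> ('pv, 'dv, 'd) heap" where
  "restrict h R = \<lparr> pval = pval h |` R,
     dval = dval h |` (range DV \<union> {Dat a | a e. e \<in> R \<and> pval h e = Some (Ad a)}) \<rparr>"

definition init_heap :: "('pv, 'dv, 'd) heap" where
  "init_heap = \<lparr> pval = (\<lambda>e. case e of PV x \<Rightarrow> Some Seg | Nxt _ _ \<Rightarrow> None), dval = Map.empty \<rparr>"

fun cond_holds :: "('pv, 'dv, 'd) heap \<Rightarrow> ('pv, 'dv) cond \<Rightarrow> bool" where
  "cond_holds h (PEq x y) = (ptr h x = ptr h y \<or> ptr h x = Some Seg \<or> ptr h y = Some Seg)"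
| "cond_holds h (PNeq x y) = (ptr h x \<noteq> ptr h y \<or> ptr h x = Some Seg \<or> ptr h y = Some Seg)"
| "cond_holds h (DEq u v) = (dval h (DV u) = dval h (DV v))"
| "cond_holds h (DNeq u v) = (dval h (DV u) \<noteq> dval h (DV v))"

definition deref_ok :: "('pv, 'dv, 'd) heap \<Rightarrow> 'pv \<Rightarrow> bool" where
  "deref_ok h x = (\<exists>a. ptr h x = Some (Ad a))"

fun enabled :: "('pv, 'dv, 'd) heap \<Rightarrow> val set \<Rightarrow> ('pv, 'dv, 'd) com \<Rightarrow> 'd alloc \<Rightarrow> bool" where
  "enabled h F (Malloc x) (FreshA a d) = (Ad a \<notin> adrs h)"
| "enabled h F (Malloc x) (ReuseA a) = (Ad a \<in> F)"
| "enabled h F (Malloc x) NoAlloc = False"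
| "enabled h F c (FreshA a d) = False"
| "enabled h F c (ReuseA a) = False"
| "enabled h F (Assert b) NoAlloc = cond_holds h b"
| "enabled h F (Free x) NoAlloc = True"
| "enabled h F (LoadNext y x i) NoAlloc = deref_ok h x"
| "enabled h F (StoreNext x i y) NoAlloc = deref_ok h x"
| "enabled h F (Assign x y) NoAlloc = True"
| "enabled h F (LoadData u x) NoAlloc = deref_ok h x"
| "enabled h F (StoreData x u) NoAlloc = deref_ok h x"
| "enabled h F (Op u f vs) NoAlloc = True"

fun upd_heap :: "('pv, 'dv, 'd) heap \<Rightarrow> ('pv, 'dv, 'd) com \<Rightarrow> 'd alloc \<Rightarrow> ('pv, 'dv, 'd) heap" where
  "upd_heap h (Malloc x) (FreshA a d) =
     \<lparr> pval = (\<lambda>e. case e of Nxt b i \<Rightarrow> (if b = a then Some Seg else pval h e) | PV _ \<Rightarrow> pval h e)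
               (PV x := Some (Ad a)),
       dval = (dval h)(Dat a := Some d) \<rparr>"
| "upd_heap h (Malloc x) (ReuseA a) = h\<lparr> pval := (pval h)(PV x := Some (Ad a)) \<rparr>"
| "upd_heap h (LoadNext y x i) _ = h\<lparr> pval := (pval h)(PV y := pval h (Nxt (addr_of h x) i)) \<rparr>"
| "upd_heap h (StoreNext x i y) _ = h\<lparr> pval := (pval h)(Nxt (addr_of h x) i := pval h (PV y)) \<rparr>"
| "upd_heap h (Assign x y) _ = h\<lparr> pval := (pval h)(PV x := pval h (PV y)) \<rparr>"
| "upd_heap h (LoadData u x) _ = h\<lparr> dval := (dval h)(DV u := dval h (Dat (addr_of h x))) \<rparr>"
| "upd_heap h (StoreData x u) _ = h\<lparr> dval := (dval h)(Dat (addr_of h x) := dval h (DV u)) \<rparr>"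
| "upd_heap h (Op u f vs) _ = h\<lparr> dval := (dval h)(DV u := f (map (\<lambda>v. dval h (DV v)) vs)) \<rparr>"
| "upd_heap h _ _ = h"

fun upd_freed :: "('pv, 'dv, 'd) heap \<Rightarrow> val set \<Rightarrow> ('pv, 'dv, 'd) com \<Rightarrow> 'd alloc \<Rightarrow> val set" where
  "upd_freed h F (Free x) _ = (if ptr h x \<noteq> Some Seg then F \<union> set_option (ptr h x) else F)"
| "upd_freed h F (Malloc x) (FreshA a d) = F - {Ad a}"
| "upd_freed h F (Malloc x) (ReuseA a) = F - {Ad a}"
| "upd_freed h F _ _ = F"

fun upd_valid :: "('pv, 'dv, 'd) heap \<Rightarrow> 'pv pexp set \<Rightarrow> ('pv, 'dv, 'd) com \<Rightarrow> 'd alloc \<Rightarrow> 'pv pexp set" where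
  "upd_valid h V (Malloc x) _ = insert (PV x) V"
| "upd_valid h V (Free x) _ =
     (case ptr h x of Some (Ad a) \<Rightarrow> V - {e. pval h e = Some (Ad a)} - {Nxt a i | i. True}
                    | _ \<Rightarrow> V)"
| "upd_valid h V (Assign x y) _ = (if PV y \<in> V then insert (PV x) V else V - {PV x})"
| "upd_valid h V (StoreNext x i y) _ =
     (if PV y \<in> V then insert (Nxt (addr_of h x) i) V else V - {Nxt (addr_of h x) i})"
| "upd_valid h V (LoadNext y x i) _ =
     (if PV x \<in> V \<and> Nxt (addr_of h x) i \<in> V then insert (PV y) V else V - {PV y})"
| "upd_valid h V _ _ = V"

fun step_cfg :: "('pv, 'dv, 'd) heap \<times> val set \<times> 'pv pexp set \<Rightarrow> ('t, 'pv, 'dv, 'd) action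
                 \<Rightarrow> ('pv, 'dv, 'd) heap \<times> val set \<times> 'pv pexp set" where
  "step_cfg (h, F, V) (t, c, al) = (upd_heap h c al, upd_freed h F c al, upd_valid h V c al)"

definition cfg :: "('t, 'pv, 'dv, 'd) action list \<Rightarrow> ('pv, 'dv, 'd) heap \<times> val set \<times> 'pv pexp set" where
  "cfg \<tau> = foldl step_cfg (init_heap, {}, UNIV) \<tau>"

definition heap_of :: "('t, 'pv, 'dv, 'd) action list \<Rightarrow> ('pv, 'dv, 'd) heap" where
  "heap_of \<tau> = fst (cfg \<tau>)"

definition freed :: "('t, 'pv, 'dv, 'd) action list \<Rightarrow> val set" where
  "freed \<tau> = fst (snd (cfg \<tau>))"

definition valid :: "('t, 'pv, 'dv, 'd) action list \<Rightarrow> 'pv pexp set" where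
  "valid \<tau> = snd (snd (cfg \<tau>))"

text \<open>A program is a family of threads indexed by thread identifiers. mm_run P tau pc:
  tau is an MM computation of P ending with thread control states pc.\<close>
inductive mm_run :: "('t \<Rightarrow> ('pv, 'dv, 'd) stmt) \<Rightarrow> ('t, 'pv, 'dv, 'd) action list
                     \<Rightarrow> ('t \<Rightarrow> ('pv, 'dv, 'd) stmt) \<Rightarrow> bool" for P where
  "mm_run P [] P"
| "mm_run P \<tau> pc \<Longrightarrow> tstep (pc t) c s' \<Longrightarrow> enabled (heap_of \<tau>) (freed \<tau>) c al
   \<Longrightarrow> mm_run P (\<tau> @ [(t, c, al)]) (pc(t := s'))"

definition semMM :: "('t \<Rightarrow> ('pv, 'dv, 'd) stmt) \<Rightarrow> ('t, 'pv, 'dv, 'd) action list set" where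
  "semMM P = {\<tau>. \<exists>pc. mm_run P \<tau> pc}"

fun race_cond :: "'pv pexp set \<Rightarrow> ('pv, 'dv) cond \<Rightarrow> bool" where
  "race_cond V (PEq x y) = (PV x \<notin> V \<or> PV y \<notin> V)"
| "race_cond V (PNeq x y) = (PV x \<notin> V \<or> PV y \<notin> V)"
| "race_cond V _ = False"

fun race_act :: "'pv pexp set \<Rightarrow> ('pv, 'dv, 'd) com \<Rightarrow> bool" where
  "race_act V (Free x) = (PV x \<notin> V)"
| "race_act V (LoadNext y x i) = (PV x \<notin> V)"
| "race_act V (StoreNext x i y) = (PV x \<notin> V)"
| "race_act V (LoadData u x) = (PV x \<notin> V)"
| "race_act V (StoreData x u) = (PV x \<notin> V)"
| "race_act V (Assert b) = race_cond V b"
| "race_act V _ = False"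

definition pointer_race :: "('t, 'pv, 'dv, 'd) action list \<Rightarrow> bool" where
  "pointer_race \<tau> = (\<tau> \<noteq> [] \<and> race_act (valid (butlast \<tau>)) (fst (snd (last \<tau>))))"

definition PRF :: "('t, 'pv, 'dv, 'd) action list \<Rightarrow> bool" where
  "PRF \<tau> = (\<forall>k \<le> length \<tau>. \<not> pointer_race (take k \<tau>))"

end

theory Submission
  imports Defs
begin

text \<open>Along a race-free computation, a freed address is never the value of a valid pointer
  expression and none of its selectors is valid: freeing invalidates exactly these, a
  reallocation removes the address from the freed set, and race freedom guarantees that
  every selector that is written or read into a valid expression belongs to an address held
  by a valid, hence non-freed, pointer.\<close>

definition freed_unreachable :: "('pv, 'dv, 'd) heap \<Rightarrow> val set \<Rightarrow> 'pv pexp set \<Rightarrow> bool" where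
  "freed_unreachable h F V \<longleftrightarrow> Seg \<notin> F \<and>
     (\<forall>b. Ad b \<in> F \<longrightarrow> (\<forall>e\<in>V. pval h e \<noteq> Some (Ad b)) \<and> (\<forall>i. Nxt b i \<notin> V))"

lemma freed_unreachable_init: "freed_unreachable init_heap {} UNIV"
  by (simp add: freed_unreachable_def)

lemma freed_unreachable_step:
  assumes "freed_unreachable h F V" and "enabled h F c al" and "\<not> race_act V c"
  shows "freed_unreachable (upd_heap h c al) (upd_freed h F c al) (upd_valid h V c al)"
proof (cases c)
  case (Malloc x)
  then show ?thesis using assms
    by (cases al) (auto simp: freed_unreachable_def split: pexp.splits if_splits)
next
  case (Free x)
  then show ?thesis using assms
    by (auto simp: freed_unreachable_def ptr_def split: option.splits val.splits if_splits)
next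
  case (StoreNext x i y)
  then show ?thesis using assms
    by (cases al) (auto simp: freed_unreachable_def deref_ok_def addr_of_def ptr_def)
qed (use assms in \<open>cases al; auto simp: freed_unreachable_def\<close>)+

lemma freed_unreachable_adrs_restrict:
  assumes "freed_unreachable h F V" and "a \<in> F"
  shows "a \<notin> adrs (restrict h V)"
proof -
  obtain b where a: "a = Ad b"
    using assms by (cases a) (auto simp: freed_unreachable_def)
  then have "\<forall>e\<in>V. pval h e \<noteq> Some (Ad b)" and "\<forall>i. Nxt b i \<notin> V"
    using assms by (auto simp: freed_unreachable_def)
  then show ?thesis
    by (auto simp: a adrs_def restrict_def ran_def restrict_map_def split: if_splits)
qed

lemma cfg_snoc:
  "cfg (\<tau> @ [(t, c, al)]) =
     (upd_heap (heap_of \<tau>) c al, upd_freed (heap_of \<tau>) (freed \<tau>) c al,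
      upd_valid (heap_of \<tau>) (valid \<tau>) c al)"
  by (cases "cfg \<tau>") (simp add: cfg_def heap_of_def freed_def valid_def)

lemma PRF_appendD:
  assumes "PRF (\<tau> @ \<sigma>)"
  shows "PRF \<tau>"
  unfolding PRF_def
proof (intro allI impI)
  fix k
  assume "k \<le> length \<tau>"
  then have "take k (\<tau> @ \<sigma>) = take k \<tau>" and "k \<le> length (\<tau> @ \<sigma>)"
    by simp_all
  then show "\<not> pointer_race (take k \<tau>)"
    using assms unfolding PRF_def by metis
qed

lemma PRF_snoc_no_race: "PRF (\<tau> @ [(t, c, al)]) \<Longrightarrow> \<not> race_act (valid \<tau>) c"
  unfolding PRF_def pointer_race_def
  by (metis butlast_snoc fst_conv last_snoc le_refl snd_conv snoc_eq_iff_butlast take_all)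

lemma mm_run_PRF_freed_unreachable:
  assumes "mm_run P \<tau> pc" and "PRF \<tau>"
  shows "freed_unreachable (heap_of \<tau>) (freed \<tau>) (valid \<tau>)"
  using assms
proof (induction rule: mm_run.induct)
  case 1
  then show ?case by (simp add: heap_of_def freed_def valid_def cfg_def freed_unreachable_init)
next
  case (2 \<tau> pc t c s' al)
  then have "freed_unreachable (heap_of \<tau>) (freed \<tau>) (valid \<tau>)"
    using PRF_appendD by blast
  moreover have "\<not> race_act (valid \<tau>) c"
    using "2.prems" by (rule PRF_snoc_no_race)
  ultimately show ?case
    using freed_unreachable_step[OF _ "2.hyps"(3)]
    by (simp add: cfg_snoc heap_of_def [of "_ @ _"] freed_def [of "_ @ _"] valid_def [of "_ @ _"])
qed

theorem mainTheorem4: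
  fixes P :: "'t \<Rightarrow> ('pv, 'dv, 'd) stmt"
    and \<tau> :: "('t, 'pv, 'dv, 'd) action list"
    and a :: val
  assumes "\<tau> \<in> semMM P"
    and "PRF \<tau>"
    and "a \<in> freed \<tau>"
  shows "a \<notin> adrs (restrict (heap_of \<tau>) (valid \<tau>))"
proof -
  obtain pc where "mm_run P \<tau> pc"
    using assms(1) by (auto simp: semMM_def)
  then have "freed_unreachable (heap_of \<tau>) (freed \<tau>) (valid \<tau>)"
    using assms(2) by (rule mm_run_PRF_freed_unreachable)
  then show ?thesis
    using assms(3) by (rule freed_unreachable_adrs_restrict)
qed

end
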